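(* Assume that for every $z\in\mathcal Z_s$ the maximum $\max_{\alpha\in\mathbb R^k,\beta\in\mathbb R^m_+}L(z,\alpha,\beta)$ is attained, and let $\mathrm{BR}(z)$ be a maximizer selected by a fixed deterministic rule (a single-valued map). Starting from any $(z_0,\alpha_0,\beta_0)$ with $z_0\in\mathcal Z_s$, consider the iteration $$(\alpha_{t+1},\beta_{t+1})=\mathrm{BR}(z_t),\qquad z_{t+1}=\mathds 1_n(\mathcal J(\alpha_t,\beta_t)).$$ Then the sequence $(z_t,\alpha_t,\beta_t)$ is eventually periodic (after finitely many iterations it enters a cycle). If the cycle has length one, i.e. the iterates are eventually constant equal to $(\bar z,\bar\alpha,\bar\beta)$, then $\bar z$ is an optimal solution of the outer minimization in $\min_{z\in\mathcal Z_s}\max_{\alpha\in\mathbb R^k,\beta\in\mathbb R^m_+}L(z,\alpha,\beta)$, and $(\bar z,\bar\alpha,\bar\beta)$ is a saddle point: $L(\bar z,\alpha,\beta)\le L(\bar z,\bar\alpha,\bar\beta)\le L(z,\bar\alpha,\bar\beta)$ for all $z\in\mathcal Z_s$, $\alpha\in\mathbb R^k$, $\beta\in\mathbb R^m_+$.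
   Context: Let $Q\in\mathbb R^{n\times n}$ be symmetric positive semidefinite with eigendecomposition $Q=\sum_{i=1}^n\lambda_i v_iv_i^\top$, $\lambda_1\ge\cdots\ge\lambda_n\ge0$, $\{v_i\}$ orthonormal. Let $c\in\mathbb R^n$, $A\in\mathbb R^{m\times n}$, $b\in\mathbb R^m$, $\eta>0$, $s\le n$ a positive integer, $k\le n$, $V=[v_1,\dots,v_k]$, $\Lambda=\mathrm{diag}(\lambda_1,\dots,\lambda_k)$. Let $\mathcal Z_s=\{z\in\{0,1\}^n:\sum_j z_j\le s\}$ and $$L(z,\alpha,\beta)=-\beta^\top b-\tfrac14\|\alpha\|_2^2-\tfrac{\eta}{4}(c+V\sqrt\Lambda\alpha+A^\top\beta)^\top\mathrm{diag}(z)(c+V\sqrt\Lambda\alpha+A^\top\beta).$$ For $(\alpha,\beta)$, let $\gamma=c+V\sqrt\Lambda\alpha+A^\top\beta$ and let $\mathcal J(\alpha,\beta)\subseteq[n]$ be the set of $s$ indices with the $s$ largest values of $|\gamma_j|$, ties broken by a fixed deterministic rule; $\mathds 1_n(\mathcal J)\in\{0,1\}^n$ is the indicator vector of $\mathcal J$. *)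

theory Defs
  imports Main "HOL-Library.Indicator_Function"
begin

text \<open>Vectors in R^d are represented as functions nat => real that vanish
  outside {0..<d}. Indices are 0-based.\<close>

definition Rvec :: "nat \<Rightarrow> (nat \<Rightarrow> real) set" where
  "Rvec d = {x. \<forall>j\<ge>d. x j = 0}"

definition Rnonneg :: "nat \<Rightarrow> (nat \<Rightarrow> real) set" where
  "Rnonneg d = {x \<in> Rvec d. \<forall>j<d. 0 \<le> x j}"

definition Zset :: "nat \<Rightarrow> nat \<Rightarrow> (nat \<Rightarrow> real) set" where
  "Zset n s = {z. (\<forall>j<n. z j = 0 \<or> z j = 1) \<and> (\<forall>j\<ge>n. z j = 0)
                   \<and> (\<Sum>j<n. z j) \<le> real s}"

text \<open>gamma = c + V sqrt(Lambda) alpha + A^T beta, where v l is the l-th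
  eigenvector (v l j its j-th component), lam l the l-th eigenvalue,
  and A i j the (i,j) entry of the m x n matrix A.\<close>
definition gamma :: "nat \<Rightarrow> nat \<Rightarrow> (nat \<Rightarrow> real) \<Rightarrow> (nat \<Rightarrow> real)
    \<Rightarrow> (nat \<Rightarrow> nat \<Rightarrow> real) \<Rightarrow> (nat \<Rightarrow> nat \<Rightarrow> real)
    \<Rightarrow> (nat \<Rightarrow> real) \<Rightarrow> (nat \<Rightarrow> real) \<Rightarrow> nat \<Rightarrow> real" where
  "gamma k m c lam v A \<alpha> \<beta> j =
     c j + (\<Sum>i<k. v i j * sqrt (lam i) * \<alpha> i) + (\<Sum>i<m. A i j * \<beta> i)"

definition Lfun :: "nat \<Rightarrow> nat \<Rightarrow> nat \<Rightarrow> real \<Rightarrow> (nat \<Rightarrow> real) \<Rightarrow> (nat \<Rightarrow> real)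
    \<Rightarrow> (nat \<Rightarrow> nat \<Rightarrow> real) \<Rightarrow> (nat \<Rightarrow> nat \<Rightarrow> real) \<Rightarrow> (nat \<Rightarrow> real)
    \<Rightarrow> (nat \<Rightarrow> real) \<Rightarrow> (nat \<Rightarrow> real) \<Rightarrow> (nat \<Rightarrow> real) \<Rightarrow> real" where
  "Lfun n k m \<eta> c lam v A b z \<alpha> \<beta> =
     - (\<Sum>i<m. \<beta> i * b i) - (1/4) * (\<Sum>i<k. (\<alpha> i)\<^sup>2)
     - (\<eta>/4) * (\<Sum>j<n. z j * (gamma k m c lam v A \<alpha> \<beta> j)\<^sup>2)"

definition top_indices :: "nat \<Rightarrow> nat \<Rightarrow> (nat \<Rightarrow> real) \<Rightarrow> nat set \<Rightarrow> bool" where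
  "top_indices n s g J \<longleftrightarrow> J \<subseteq> {..<n} \<and> card J = s \<and>
     (\<forall>j\<in>J. \<forall>j'\<in>{..<n} - J. \<bar>g j'\<bar> \<le> \<bar>g j\<bar>)"

definition ind_vec :: "nat set \<Rightarrow> nat \<Rightarrow> real" where
  "ind_vec J = (\<lambda>j. if j \<in> J then 1 else 0)"

definition maxval :: "nat \<Rightarrow> nat \<Rightarrow> nat \<Rightarrow> real \<Rightarrow> (nat \<Rightarrow> real) \<Rightarrow> (nat \<Rightarrow> real)
    \<Rightarrow> (nat \<Rightarrow> nat \<Rightarrow> real) \<Rightarrow> (nat \<Rightarrow> nat \<Rightarrow> real) \<Rightarrow> (nat \<Rightarrow> real)
    \<Rightarrow> (nat \<Rightarrow> real) \<Rightarrow> real" where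
  "maxval n k m \<eta> c lam v A b z =
     Sup {Lfun n k m \<eta> c lam v A b z \<alpha> \<beta> | \<alpha> \<beta>. \<alpha> \<in> Rvec k \<and> \<beta> \<in> Rnonneg m}"

end

theory Submission
  imports Defs
begin

(* The map (z, \<alpha>, \<beta>) \<mapsto> (1(J(\<alpha>, \<beta>)), BR z) takes only finitely many values from the
   second step on (z ranges over indicator vectors of subsets of [n], and (\<alpha>, \<beta>) over their
   images under BR), so by pigeonhole the iterates repeat and hence cycle. At a fixed point
   (z', \<alpha>', \<beta>'), the pair (\<alpha>', \<beta>') maximises L(z', -, -) by definition of BR, while z'
   minimises L(-, \<alpha>', \<beta>'): L is affine in z with coefficients -\<eta>/4 \<gamma>(j)^2, and 1(J) picks the
   s largest \<gamma>(j)^2. The saddle point then gives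
   max L(z', -, -) = L(z', \<alpha>', \<beta>') \<le> L(z, \<alpha>', \<beta>') \<le> max L(z, -, -). *)

lemma iterate_shift_eq:
  assumes step: "\<And>t. x (Suc t) = f (x t)" and "x i = x j"
  shows "x (i + d) = x (j + d)"
  using assms(2) by (induction d) (simp_all add: step)

lemma iterate_eventually_periodic:
  assumes step: "\<And>t. x (Suc t) = f (x t)" and fin: "finite (x ` {t1..})"
  shows "\<exists>t0 p. 0 < p \<and> (\<forall>t\<ge>t0. x (t + p) = x t)"
proof -
  have "\<not> inj_on x {t1..}"
    using fin finite_imageD infinite_Ici by blast
  then obtain i j where "i < j" "x i = x j"
    unfolding inj_on_def by (metis linorder_neqE_nat)
  have "x (t + (j - i)) = x t" if "i \<le> t" for t
  proof -
    obtain d where t: "t = i + d" using \<open>i \<le> t\<close> le_Suc_ex by blast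
    have "t + (j - i) = j + d" using t \<open>i < j\<close> by simp
    with t show ?thesis using iterate_shift_eq[OF step \<open>x i = x j\<close>] by (simp add: add.commute)
  qed
  with \<open>i < j\<close> show ?thesis by (intro exI[of _ i] exI[of _ "j - i"]) simp
qed

lemma sum_squares_le_top_indices:
  fixes g :: "nat \<Rightarrow> real"
  assumes top: "top_indices n s g J" and S: "S \<subseteq> {..<n}" "card S \<le> s"
  shows "(\<Sum>j\<in>S. (g j)\<^sup>2) \<le> (\<Sum>j\<in>J. (g j)\<^sup>2)"
proof -
  have J: "J \<subseteq> {..<n}" "card J = s"
    and dom: "\<And>j j'. j \<in> J \<Longrightarrow> j' \<in> {..<n} - J \<Longrightarrow> \<bar>g j'\<bar> \<le> \<bar>g j\<bar>"
    using top unfolding top_indices_def by auto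
  have fin: "finite S" "finite J" using S J finite_subset by blast+
  have "card (S - J) = card S - card (S \<inter> J)" "card (J - S) = card J - card (S \<inter> J)"
    using fin by (simp_all add: card_Diff_subset_Int Int_commute)
  then have "card (S - J) \<le> card (J - S)" using S J by linarith
  then obtain f where f: "f ` (S - J) \<subseteq> J - S" "inj_on f (S - J)"
    using card_le_inj[of "S - J" "J - S"] fin by auto
  have "(\<Sum>j\<in>S - J. (g j)\<^sup>2) \<le> (\<Sum>j\<in>S - J. (g (f j))\<^sup>2)"
    using f(1) S dom by (intro sum_mono) (auto simp: abs_le_square_iff)
  also have "\<dots> = (\<Sum>j\<in>f ` (S - J). (g j)\<^sup>2)"
    using sum.reindex[OF f(2), of "\<lambda>j. (g j)\<^sup>2"] by simp
  also have "\<dots> \<le> (\<Sum>j\<in>J - S. (g j)\<^sup>2)"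
    using f(1) fin by (intro sum_mono2) auto
  finally have "(\<Sum>j\<in>S - J. (g j)\<^sup>2) \<le> (\<Sum>j\<in>J - S. (g j)\<^sup>2)" .
  moreover have "(\<Sum>j\<in>S. (g j)\<^sup>2) = (\<Sum>j\<in>S \<inter> J. (g j)\<^sup>2) + (\<Sum>j\<in>S - J. (g j)\<^sup>2)"
    "(\<Sum>j\<in>J. (g j)\<^sup>2) = (\<Sum>j\<in>S \<inter> J. (g j)\<^sup>2) + (\<Sum>j\<in>J - S. (g j)\<^sup>2)"
    using fin sum.Int_Diff by (metis, metis Int_commute)
  ultimately show ?thesis by linarith
qed

lemma Zset_weighted_sum:
  assumes "z \<in> Zset n s"
  shows "(\<Sum>j<n. z j * f j) = (\<Sum>j\<in>{j\<in>{..<n}. z j = 1}. f j)"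
proof -
  have "(\<Sum>j<n. z j * f j) = (\<Sum>j<n. if z j = 1 then f j else 0)"
    using assms unfolding Zset_def by (intro sum.cong) auto
  also have "\<dots> = (\<Sum>j\<in>{j\<in>{..<n}. z j = 1}. f j)"
    by (rule sum.inter_filter[symmetric]) simp
  finally show ?thesis .
qed

lemma card_Zset_support:
  assumes "z \<in> Zset n s"
  shows "card {j\<in>{..<n}. z j = 1} \<le> s"
proof -
  have "real (card {j\<in>{..<n}. z j = 1}) = (\<Sum>j<n. z j * 1)"
    using Zset_weighted_sum[OF assms, of "\<lambda>_. 1"] by simp
  with assms show ?thesis unfolding Zset_def by simp
qed

lemma ind_vec_support:
  assumes "J \<subseteq> {..<n}"
  shows "{j\<in>{..<n}. ind_vec J j = 1} = J"
  using assms unfolding ind_vec_def by auto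

lemma ind_vec_mem_Zset:
  assumes "J \<subseteq> {..<n}" "card J \<le> s"
  shows "ind_vec J \<in> Zset n s"
proof -
  have "(\<Sum>j<n. ind_vec J j) = real (card J)"
    using assms(1) by (simp add: ind_vec_def sum.If_cases Int_absorb1)
  with assms show ?thesis unfolding Zset_def ind_vec_def by auto
qed

lemma Lfun_top_indices_le:
  assumes "0 < \<eta>" and top: "top_indices n s (gamma k m c lam v A \<alpha> \<beta>) J" and z: "z \<in> Zset n s"
  shows "Lfun n k m \<eta> c lam v A b (ind_vec J) \<alpha> \<beta> \<le> Lfun n k m \<eta> c lam v A b z \<alpha> \<beta>"
proof -
  define g where "g = gamma k m c lam v A \<alpha> \<beta>"
  have J: "J \<subseteq> {..<n}" "card J = s" using top unfolding top_indices_def by auto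
  then have zJ: "ind_vec J \<in> Zset n s" by (simp add: ind_vec_mem_Zset)
  have "(\<Sum>j<n. z j * (g j)\<^sup>2) \<le> (\<Sum>j<n. ind_vec J j * (g j)\<^sup>2)"
    unfolding Zset_weighted_sum[OF z] Zset_weighted_sum[OF zJ] ind_vec_support[OF J(1)]
    using top card_Zset_support[OF z] by (intro sum_squares_le_top_indices) (auto simp: g_def)
  then have "\<eta>/4 * (\<Sum>j<n. z j * (g j)\<^sup>2) \<le> \<eta>/4 * (\<Sum>j<n. ind_vec J j * (g j)\<^sup>2)"
    using \<open>0 < \<eta>\<close> by (intro mult_left_mono) auto
  then show ?thesis unfolding Lfun_def g_def by linarith
qed

lemma maxval_eq_maximum:
  assumes "\<alpha>0 \<in> Rvec k" "\<beta>0 \<in> Rnonneg m"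
    and max: "\<forall>\<alpha>\<in>Rvec k. \<forall>\<beta>\<in>Rnonneg m.
      Lfun n k m \<eta> c lam v A b z \<alpha> \<beta> \<le> Lfun n k m \<eta> c lam v A b z \<alpha>0 \<beta>0"
  shows "maxval n k m \<eta> c lam v A b z = Lfun n k m \<eta> c lam v A b z \<alpha>0 \<beta>0"
  unfolding maxval_def using assms by (intro cSup_eq_maximum) auto

lemma saddle_point_of_fixed_point:
  assumes "0 < \<eta>"
    and attained: "\<forall>z\<in>Zset n s. \<exists>\<alpha>\<in>Rvec k. \<exists>\<beta>\<in>Rnonneg m.
        \<forall>\<alpha>'\<in>Rvec k. \<forall>\<beta>'\<in>Rnonneg m.
          Lfun n k m \<eta> c lam v A b z \<alpha>' \<beta>' \<le> Lfun n k m \<eta> c lam v A b z \<alpha> \<beta>"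
    and top: "top_indices n s (gamma k m c lam v A ab bb) J" and zb: "zb = ind_vec J"
    and feas: "ab \<in> Rvec k" "bb \<in> Rnonneg m"
    and max: "\<forall>\<alpha>\<in>Rvec k. \<forall>\<beta>\<in>Rnonneg m.
      Lfun n k m \<eta> c lam v A b zb \<alpha> \<beta> \<le> Lfun n k m \<eta> c lam v A b zb ab bb"
  shows "(zb \<in> Zset n s \<and>
         (\<forall>z\<in>Zset n s. maxval n k m \<eta> c lam v A b zb \<le> maxval n k m \<eta> c lam v A b z)) \<and>
        (\<forall>z\<in>Zset n s. \<forall>\<alpha>\<in>Rvec k. \<forall>\<beta>\<in>Rnonneg m.
           Lfun n k m \<eta> c lam v A b zb \<alpha> \<beta> \<le> Lfun n k m \<eta> c lam v A b zb ab bb \<and>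
           Lfun n k m \<eta> c lam v A b zb ab bb \<le> Lfun n k m \<eta> c lam v A b z ab bb)"
proof -
  have zb_min: "Lfun n k m \<eta> c lam v A b zb ab bb \<le> Lfun n k m \<eta> c lam v A b z ab bb"
    if "z \<in> Zset n s" for z
    using Lfun_top_indices_le[OF \<open>0 < \<eta>\<close> top that] zb by simp
  have "maxval n k m \<eta> c lam v A b zb \<le> maxval n k m \<eta> c lam v A b z" if z: "z \<in> Zset n s" for z
  proof -
    obtain \<alpha>0 \<beta>0 where opt: "\<alpha>0 \<in> Rvec k" "\<beta>0 \<in> Rnonneg m"
      "\<forall>\<alpha>\<in>Rvec k. \<forall>\<beta>\<in>Rnonneg m.
        Lfun n k m \<eta> c lam v A b z \<alpha> \<beta> \<le> Lfun n k m \<eta> c lam v A b z \<alpha>0 \<beta>0"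
      using attained z by blast
    have "maxval n k m \<eta> c lam v A b zb = Lfun n k m \<eta> c lam v A b zb ab bb"
      using maxval_eq_maximum[OF feas max] .
    also have "\<dots> \<le> Lfun n k m \<eta> c lam v A b z ab bb" using zb_min[OF z] .
    also have "\<dots> \<le> maxval n k m \<eta> c lam v A b z"
      using maxval_eq_maximum[OF opt] opt(3) feas by simp
    finally show ?thesis .
  qed
  moreover have "zb \<in> Zset n s"
    using top zb ind_vec_mem_Zset unfolding top_indices_def by auto
  ultimately show ?thesis using max zb_min by blast
qed

theorem proposition3p3:
  fixes n m k s :: nat and \<eta> :: real
    and Q :: "nat \<Rightarrow> nat \<Rightarrow> real" and lam :: "nat \<Rightarrow> real" and v :: "nat \<Rightarrow> nat \<Rightarrow> real"
    and c :: "nat \<Rightarrow> real" and A :: "nat \<Rightarrow> nat \<Rightarrow> real" and b :: "nat \<Rightarrow> real"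
    and BR :: "(nat \<Rightarrow> real) \<Rightarrow> (nat \<Rightarrow> real) \<times> (nat \<Rightarrow> real)"
    and J :: "(nat \<Rightarrow> real) \<Rightarrow> (nat \<Rightarrow> real) \<Rightarrow> nat set"
    and zs as bs :: "nat \<Rightarrow> nat \<Rightarrow> real"
  assumes Q_sym: "\<forall>i<n. \<forall>j<n. Q i j = Q j i"
    and Q_psd: "\<forall>x. 0 \<le> (\<Sum>i<n. \<Sum>j<n. x i * Q i j * x j)"
    and Q_eig: "\<forall>i<n. \<forall>j<n. Q i j = (\<Sum>l<n. lam l * v l i * v l j)"
    and v_orth: "\<forall>l<n. \<forall>l'<n. (\<Sum>j<n. v l j * v l' j) = (if l = l' then 1 else 0)"
    and lam_dec: "\<forall>l l'. l \<le> l' \<and> l' < n \<longrightarrow> lam l' \<le> lam l"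
    and lam_nonneg: "\<forall>l<n. 0 \<le> lam l"
    and eta_pos: "0 < \<eta>"
    and s_pos: "0 < s" and s_le: "s \<le> n" and k_le: "k \<le> n"
    and attained: "\<forall>z\<in>Zset n s. \<exists>\<alpha>\<in>Rvec k. \<exists>\<beta>\<in>Rnonneg m.
        \<forall>\<alpha>'\<in>Rvec k. \<forall>\<beta>'\<in>Rnonneg m.
          Lfun n k m \<eta> c lam v A b z \<alpha>' \<beta>' \<le> Lfun n k m \<eta> c lam v A b z \<alpha> \<beta>"
    and BR_max: "\<forall>z\<in>Zset n s. fst (BR z) \<in> Rvec k \<and> snd (BR z) \<in> Rnonneg m \<and>
        (\<forall>\<alpha>\<in>Rvec k. \<forall>\<beta>\<in>Rnonneg m.
          Lfun n k m \<eta> c lam v A b z \<alpha> \<beta> \<le> Lfun n k m \<eta> c lam v A b z (fst (BR z)) (snd (BR z)))"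
    and J_top: "\<forall>\<alpha> \<beta>. top_indices n s (gamma k m c lam v A \<alpha> \<beta>) (J \<alpha> \<beta>)"
    and init: "zs 0 \<in> Zset n s" "as 0 \<in> Rvec k" "bs 0 \<in> Rvec m"
    and step_ab: "\<forall>t. (as (Suc t), bs (Suc t)) = BR (zs t)"
    and step_z: "\<forall>t. zs (Suc t) = ind_vec (J (as t) (bs t))"
  shows "(\<exists>t0 p. 0 < p \<and> (\<forall>t\<ge>t0. zs (t + p) = zs t \<and> as (t + p) = as t \<and> bs (t + p) = bs t))
    \<and> (\<forall>zb ab bb t0. (\<forall>t\<ge>t0. zs t = zb \<and> as t = ab \<and> bs t = bb) \<longrightarrow>
        (zb \<in> Zset n s \<and>
         (\<forall>z\<in>Zset n s. maxval n k m \<eta> c lam v A b zb \<le> maxval n k m \<eta> c lam v A b z)) \<and>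
        (\<forall>z\<in>Zset n s. \<forall>\<alpha>\<in>Rvec k. \<forall>\<beta>\<in>Rnonneg m.
           Lfun n k m \<eta> c lam v A b zb \<alpha> \<beta> \<le> Lfun n k m \<eta> c lam v A b zb ab bb \<and>
           Lfun n k m \<eta> c lam v A b zb ab bb \<le> Lfun n k m \<eta> c lam v A b z ab bb))"
proof ((rule conjI; (intro allI impI)?), goal_cases)
  case 1
  define x where "x t = (zs t, as t, bs t)" for t
  define Z where "Z = ind_vec ` Pow {..<n}"
  have zs_Z: "zs (Suc t) \<in> Z" for t
    using step_z J_top unfolding Z_def top_indices_def by auto
  have "x (Suc (Suc t)) \<in> Z \<times> BR ` Z" for t
    using zs_Z step_ab by (simp add: x_def)
  then have "x ` {2..} \<subseteq> Z \<times> BR ` Z"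
    by (metis image_subsetI atLeast_iff add_2_eq_Suc le_add_diff_inverse)
  then have "finite (x ` {2..})" by (rule finite_subset) (simp add: Z_def)
  moreover have "x (Suc t) = (\<lambda>(z, \<alpha>, \<beta>). (ind_vec (J \<alpha> \<beta>), BR z)) (x t)" for t
    using step_ab step_z by (simp add: x_def)
  ultimately obtain t0 p where "0 < p" "\<forall>t\<ge>t0. x (t + p) = x t"
    using iterate_eventually_periodic by blast
  then show ?case by (auto simp: x_def)
next
  case (2 zb ab bb t0)
  then have zb: "zb = ind_vec (J ab bb)" and BR_zb: "BR zb = (ab, bb)"
    using step_z step_ab by (metis le_Suc_eq order_refl)+
  have "zb \<in> Zset n s"
    using J_top zb ind_vec_mem_Zset unfolding top_indices_def by auto
  note BR_zb_max = BR_max[rule_format, OF this, unfolded BR_zb prod.sel]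
  show ?case
    using BR_zb_max by (intro saddle_point_of_fixed_point[OF eta_pos attained J_top[rule_format] zb]) auto
qed

end
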